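(* Let $d\geq 2$ and let $\mathsf{M}_1,\mathsf{M}_2$ be two $d$-outcome POVMs (outcomes labelled $1,\dots,d$) on $\mathbb{C}^d$. If $\mathsf{M}_1$ and $\mathsf{M}_2$ are compatible, then $$\bar{P}_{\rm qrac}(\mathsf{M}_1,\mathsf{M}_2)=\frac{1}{2d^2}\sum_{x,y=1}^d \big\|\mathsf{M}_1(x)+\mathsf{M}_2(y)\big\| \leq \frac12\left(1+\frac1d\right),$$ i.e. a compatible pair of $d$-outcome measurements is not useful for $(2,d)$-QRAC.
   Context: $\|\cdot\|$ is the operator norm. Two POVMs $\mathsf{M}_1$ (outcomes $x$) and $\mathsf{M}_2$ (outcomes $y$) are compatible if there exists a POVM $\mathsf{G}$ on the product outcome set with $\sum_y \mathsf{G}(x,y)=\mathsf{M}_1(x)$ and $\sum_x\mathsf{G}(x,y)=\mathsf{M}_2(y)$ for all $x,y$; otherwise incompatible. In the $(2,d)$ quantum random access code, Alice receives two dits $(x_1,x_2)$ uniformly at random and sends a state $\mathcal{E}(x_1,x_2)$ on $\mathbb{C}^d$; Bob receives $j\in\{1,2\}$ uniformly and measures $\mathsf{M}_j$, succeeding if the outcome is $x_j$. $\bar P_{\rm qrac}(\mathsf{M}_1,\mathsf{M}_2)$ is the average success probability with the encoding optimized, which equals the displayed norm expression. The quantity $\frac12(1+\frac1d)$ is the optimal average success probability of the classical $(2,d)$ random access code; a pair is called useful for $(2,d)$-QRAC if $\bar P_{\rm qrac}$ strictly exceeds it. *)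

theory Defs
  imports "HOL-Analysis.Analysis"
begin

text \<open>Matrices on C^d are represented as complex^'n^'n with CARD('n) = d.
  The norm on complex^'n is the Euclidean (l2) norm, so onorm of the induced
  linear map is the operator norm.\<close>

definition opnorm :: "complex^'n^'n \<Rightarrow> real" where
  "opnorm A = onorm (\<lambda>v. A *v v)"

definition psd :: "complex^'n^'n \<Rightarrow> bool" where
  "psd A \<longleftrightarrow> (\<forall>v::complex^'n.
      (\<Sum>i\<in>UNIV. cnj (v$i) * (A *v v)$i) \<in> \<real> \<and>
      0 \<le> Re (\<Sum>i\<in>UNIV. cnj (v$i) * (A *v v)$i))"

definition povm :: "'x set \<Rightarrow> ('x \<Rightarrow> complex^'n^'n) \<Rightarrow> bool" where
  "povm X M \<longleftrightarrow> finite X \<and> (\<forall>x\<in>X. psd (M x)) \<and> (\<Sum>x\<in>X. M x) = mat 1"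

definition compatible ::
  "'x set \<Rightarrow> ('x \<Rightarrow> complex^'n^'n) \<Rightarrow> 'y set \<Rightarrow> ('y \<Rightarrow> complex^'n^'n) \<Rightarrow> bool" where
  "compatible X M1 Y M2 \<longleftrightarrow>
     (\<exists>G :: 'x \<times> 'y \<Rightarrow> complex^'n^'n. povm (X \<times> Y) G \<and>
        (\<forall>x\<in>X. (\<Sum>y\<in>Y. G (x, y)) = M1 x) \<and>
        (\<forall>y\<in>Y. (\<Sum>x\<in>X. G (x, y)) = M2 y))"

definition density :: "complex^'n^'n \<Rightarrow> bool" where
  "density \<rho> \<longleftrightarrow> psd \<rho> \<and> trace \<rho> = 1"

definition qrac_prob ::
  "(nat \<Rightarrow> nat \<Rightarrow> complex^'n^'n) \<Rightarrow> (nat \<Rightarrow> complex^'n^'n) \<Rightarrow> (nat \<Rightarrow> complex^'n^'n) \<Rightarrow> real" where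
  "qrac_prob E M1 M2 =
     (let d = CARD('n) in
      (1 / (2 * real d ^ 2)) *
      (\<Sum>x1\<in>{1..d}. \<Sum>x2\<in>{1..d}.
          Re (trace (E x1 x2 ** M1 x1)) + Re (trace (E x1 x2 ** M2 x2))))"

definition Pqrac :: "(nat \<Rightarrow> complex^'n^'n) \<Rightarrow> (nat \<Rightarrow> complex^'n^'n) \<Rightarrow> real" where
  "Pqrac M1 M2 =
     (SUP E \<in> {E :: nat \<Rightarrow> nat \<Rightarrow> complex^'n^'n.
                \<forall>x1\<in>{1..CARD('n)}. \<forall>x2\<in>{1..CARD('n)}. density (E x1 x2)}.
        qrac_prob E M1 M2)"

end

theory Submission
  imports Defs
begin

(* Every positive semidefinite matrix is a finite sum of rank-one matrices v v*, obtained by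
   Gaussian elimination on a diagonal pivot.  Hence Re tr(rho A) <= ||A|| for every state rho,
   with equality for the projector onto a unit vector maximising <v, A v> when A >= 0; this gives
   the norm formula for the optimal QRAC success probability.  If G is a joint POVM of M1 and M2
   and v maximises <v, (M1 x + M2 y) v>, then the probabilities <v, G(a,b) v> sum to 1 and the
   row a = x and the column b = y share only the entry (x,y), so
   ||M1 x + M2 y|| <= 1 + tr G(x,y); summing over x, y bounds the total by d^2 + d. *)

definition cinner :: "complex^'n \<Rightarrow> complex^'n \<Rightarrow> complex" where
  "cinner u w = (\<Sum>i\<in>UNIV. cnj (u$i) * w$i)"

lemma psd_iff_cinner:
  "psd A \<longleftrightarrow> (\<forall>v. cinner v (A *v v) \<in> \<real> \<and> 0 \<le> Re (cinner v (A *v v)))"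
  by (simp add: psd_def cinner_def)

lemma cinner_add_left: "cinner (u + v) w = cinner u w + cinner v w"
  by (simp add: cinner_def distrib_right sum.distrib)

lemma cinner_add_right: "cinner u (v + w) = cinner u v + cinner u w"
  by (simp add: cinner_def distrib_left sum.distrib)

lemma cinner_diff_right: "cinner u (v - w) = cinner u v - cinner u w"
  by (simp add: cinner_def right_diff_distrib sum_subtractf)

lemma cinner_scale_left: "cinner (c *s u) w = cnj c * cinner u w"
  by (simp add: cinner_def sum_distrib_left mult_ac)

lemma cinner_scale_right: "cinner u (c *s w) = c * cinner u w"
  by (simp add: cinner_def sum_distrib_left mult_ac)

lemma cinner_sum_right: "cinner u (\<Sum>k\<in>K. w k) = (\<Sum>k\<in>K. cinner u (w k))"
  by (induct K rule: infinite_finite_induct) (simp_all add: cinner_add_right cinner_def[of _ 0])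

lemma cnj_cinner: "cnj (cinner u w) = cinner w u"
  by (simp add: cinner_def mult_ac)

lemma cinner_self: "cinner u u = of_real ((norm u)\<^sup>2)"
proof -
  have "cinner u u = (\<Sum>i\<in>UNIV. of_real ((cmod (u$i))\<^sup>2))"
    unfolding cinner_def by (rule sum.cong) (simp_all only: complex_norm_square mult.commute)
  also have "\<dots> = of_real ((norm u)\<^sup>2)"
    by (simp add: norm_vec_def L2_set_def sum_nonneg)
  finally show ?thesis .
qed

lemma cinner_axis_left: "cinner (axis i 1) w = w$i"
proof -
  have "\<And>k. cnj (axis i 1 $ k) * w$k = (if k = i then w$i else 0)"
    by (simp add: axis_def)
  then show ?thesis unfolding cinner_def by simp
qed

lemma norm_cinner_le: "norm (cinner u w) \<le> norm u * norm w"
proof -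
  have "norm (cinner u w) \<le> (\<Sum>i\<in>UNIV. cmod (u$i) * cmod (w$i))"
    unfolding cinner_def by (rule order_trans[OF norm_sum]) (simp add: norm_mult)
  also have "\<dots> \<le> L2_set (\<lambda>i. cmod (u$i)) UNIV * L2_set (\<lambda>i. cmod (w$i)) UNIV"
    using L2_set_mult_ineq[of "\<lambda>i. cmod (u$i)" "\<lambda>i. cmod (w$i)" UNIV] by simp
  finally show ?thesis by (simp add: norm_vec_def)
qed

lemma scaleR_eq_of_real_scale: "r *\<^sub>R (u::complex^'n) = (of_real r :: complex) *s u"
  unfolding vec_eq_iff vector_scaleR_component vector_smult_component
  by (simp add: scaleR_conv_of_real)

lemma matrix_vector_mult_axis: "(A *v axis j 1)$i = (A$i$j :: complex)"
proof -
  have "\<And>k. A$i$k * axis j 1 $ k = (if k = j then A$i$j else 0)"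
    by (simp add: axis_def)
  then show ?thesis unfolding matrix_vector_mult_def by simp
qed

lemma matrix_vector_mult_sum_left:
  "(\<Sum>k\<in>K. A k) *v (v::complex^'n) = (\<Sum>k\<in>K. A k *v v)"
  by (induct K rule: infinite_finite_induct) (simp_all add: matrix_vector_mult_add_rdistrib)

lemma cinner_mult_le_opnorm: "Re (cinner v (A *v v)) \<le> opnorm A * (norm v)\<^sup>2"
proof -
  have "Re (cinner v (A *v v)) \<le> norm v * norm (A *v v)"
    using complex_Re_le_cmod norm_cinner_le order_trans by blast
  also have "\<dots> \<le> norm v * (opnorm A * norm v)"
    unfolding opnorm_def
    by (intro mult_left_mono onorm matrix_vector_mul_bounded_linear norm_ge_zero)
  finally show ?thesis by (simp add: power2_eq_square mult_ac)
qed

lemma cinner_mult_add_scale: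
  "cinner (u + t *s w) (A *v (u + t *s w)) =
     cinner u (A *v u) + t * cinner u (A *v w) + cnj t * cinner w (A *v u)
     + cnj t * t * cinner w (A *v w)"
  by (simp add: matrix_vector_right_distrib vector_scalar_commute cinner_add_left
      cinner_add_right cinner_scale_left cinner_scale_right algebra_simps)

lemma psd_hermitian:
  assumes "psd A"
  shows "cinner w (A *v u) = cnj (cinner u (A *v w))"
proof -
  have real: "Im (cinner v (A *v v)) = 0" for v
    using assms complex_is_Real_iff unfolding psd_iff_cinner by blast
  have "Im (cinner u (A *v w)) + Im (cinner w (A *v u)) = 0"
    using real[of "u + 1 *s w"] real[of u] real[of w]
    unfolding cinner_mult_add_scale by simp
  moreover have "Re (cinner u (A *v w)) - Re (cinner w (A *v u)) = 0"
    using real[of "u + \<i> *s w"] real[of u] real[of w]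
    unfolding cinner_mult_add_scale by simp
  ultimately show ?thesis by (simp add: complex_eq_iff)
qed

lemma le_mult_if_quadratic_nonneg:
  fixes x b y :: real
  assumes "\<And>r. 0 \<le> x - 2 * r * b + r\<^sup>2 * b * y" and "0 \<le> y"
  shows "b \<le> x * y"
proof (cases "y = 0")
  case True
  show ?thesis
  proof (rule ccontr)
    assume "\<not> b \<le> x * y"
    then have "0 < b" using True by simp
    have "0 \<le> x - 2 * ((x + 1) / (2 * b)) * b" using assms(1)[of "(x + 1) / (2 * b)"] True by simp
    also have "\<dots> = -1" using \<open>0 < b\<close> by (simp add: field_simps)
    finally show False by simp
  qed
next
  case False
  then have "0 < y" using assms(2) by simp
  have "0 \<le> x - 2 * (1 / y) * b + (1 / y)\<^sup>2 * b * y" by (rule assms(1))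
  also have "\<dots> = x - b / y" using \<open>0 < y\<close> by (simp add: field_simps power2_eq_square)
  finally show ?thesis using \<open>0 < y\<close> by (simp add: field_simps)
qed

lemma psd_cauchy_schwarz:
  assumes "psd A"
  shows "(cmod (cinner u (A *v w)))\<^sup>2 \<le> Re (cinner u (A *v u)) * Re (cinner w (A *v w))"
proof -
  define a where "a = cinner u (A *v w)"
  have conj: "cinner w (A *v u) = cnj a"
    unfolding a_def by (rule psd_hermitian[OF assms])
  have "0 \<le> Re (cinner u (A *v u)) - 2 * r * (cmod a)\<^sup>2 + r\<^sup>2 * (cmod a)\<^sup>2 * Re (cinner w (A *v w))"
    for r :: real
  proof -
    have "0 \<le> Re (cinner (u + (- of_real r * cnj a) *s w) (A *v (u + (- of_real r * cnj a) *s w)))"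
      using assms unfolding psd_iff_cinner by blast
    also have "\<dots> = Re (cinner u (A *v u)) - 2 * r * (cmod a)\<^sup>2 + r\<^sup>2 * (cmod a)\<^sup>2 * Re (cinner w (A *v w))"
      unfolding cinner_mult_add_scale conj a_def[symmetric] cmod_power2
      by (simp add: power2_eq_square algebra_simps)
    finally show ?thesis .
  qed
  from le_mult_if_quadratic_nonneg[OF this] assms show ?thesis
    unfolding a_def psd_iff_cinner by simp
qed

lemma psd_add: "psd A \<Longrightarrow> psd B \<Longrightarrow> psd (A + B)"
  by (simp add: psd_iff_cinner matrix_vector_mult_add_rdistrib cinner_add_right)

lemma psd_zero: "psd 0"
  by (simp add: psd_iff_cinner cinner_def)

lemma psd_sum: "(\<And>k. k \<in> K \<Longrightarrow> psd (A k)) \<Longrightarrow> psd (\<Sum>k\<in>K. A k)"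
  by (induct K rule: infinite_finite_induct) (simp_all add: psd_add psd_zero)

lemma psd_diag:
  assumes "psd P"
  shows "P$a$a = of_real (Re (P$a$a))" and "0 \<le> Re (P$a$a)"
  using assms unfolding psd_iff_cinner
  by (metis cinner_axis_left matrix_vector_mult_axis of_real_Re)+

lemma psd_row_eq_0:
  assumes "psd P" and "P$a$a = 0"
  shows "P$a$j = 0"
  using psd_cauchy_schwarz[OF assms(1), of "axis a 1" "axis j 1"] assms(2)
  by (simp add: cinner_axis_left matrix_vector_mult_axis)

section \<open>Rank-one decomposition\<close>

definition outer :: "complex^'n \<Rightarrow> complex^'n \<Rightarrow> complex^'n^'n" where
  "outer u w = (\<chi> i j. u$i * cnj (w$j))"

lemma outer_mult_vector: "outer u w *v v = cinner w v *s u"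
  by (simp add: outer_def matrix_vector_mult_def cinner_def vec_eq_iff sum_distrib_left mult_ac)

lemma trace_mult_outer: "trace (A ** outer u w) = cinner w (A *v u)"
proof -
  have "trace (A ** outer u w) = (\<Sum>i\<in>UNIV. \<Sum>k\<in>UNIV. cnj (w$i) * (A$i$k * u$k))"
    by (simp add: trace_def matrix_matrix_mult_def outer_def mult_ac)
  also have "\<dots> = cinner w (A *v u)"
    by (simp add: cinner_def matrix_vector_mult_def sum_distrib_left)
  finally show ?thesis .
qed

lemma psd_outer: "psd (outer v v)"
  by (simp add: psd_iff_cinner outer_mult_vector cinner_scale_right
      cnj_cinner[of v, symmetric] complex_norm_square[symmetric] del: of_real_power)

lemma psd_diff_outer:
  assumes "psd P" and "\<And>v. (cmod (cinner w v))\<^sup>2 \<le> Re (cinner v (P *v v))"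
  shows "psd (P - outer w w)"
proof -
  have "cinner v ((P - outer w w) *v v) = cinner v (P *v v) - of_real ((cmod (cinner w v))\<^sup>2)" for v
    by (simp add: matrix_vector_mult_diff_rdistrib cinner_diff_right outer_mult_vector
        cinner_scale_right cnj_cinner[of w, symmetric] complex_norm_square mult.commute
        del: of_real_power)
  then show ?thesis
    using assms unfolding psd_iff_cinner by (simp add: Reals_diff)
qed

lemma psd_pivot_bound:
  assumes "psd P"
  shows "(cmod (cinner ((1 / of_real (sqrt (Re (P$a$a)))) *s (P *v axis a 1)) v))\<^sup>2
           \<le> Re (cinner v (P *v v))"
proof -
  define p where "p = Re (P$a$a)"
  have "0 \<le> p" unfolding p_def by (rule psd_diag(2)[OF assms])
  have "cinner (P *v axis a 1) v = cinner (axis a 1) (P *v v)"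
    using psd_hermitian[OF assms, of "axis a 1" v] by (simp add: cnj_cinner)
  then have "(cmod (cinner ((1 / of_real (sqrt p)) *s (P *v axis a 1)) v))\<^sup>2
      = (cmod (cinner (axis a 1) (P *v v)))\<^sup>2 / p"
    using \<open>0 \<le> p\<close> by (simp add: cinner_scale_left norm_mult norm_divide power_mult_distrib
        power_divide)
  also have "\<dots> \<le> Re (cinner v (P *v v))"
  proof -
    have "(cmod (cinner (axis a 1) (P *v v)))\<^sup>2 \<le> p * Re (cinner v (P *v v))"
      using psd_cauchy_schwarz[OF assms, of "axis a 1" v]
      by (simp add: p_def cinner_axis_left matrix_vector_mult_axis)
    moreover have "0 \<le> Re (cinner v (P *v v))"
      using assms unfolding psd_iff_cinner by blast
    ultimately show ?thesis
      using \<open>0 \<le> p\<close> by (cases "p = 0") (simp_all add: divide_le_eq mult.commute)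
  qed
  finally show ?thesis unfolding p_def .
qed

lemma psd_eq_sum_outer_on:
  assumes "finite S" and "psd P" and "\<And>i j. i \<notin> S \<Longrightarrow> P$i$j = 0"
  shows "\<exists>w. P = (\<Sum>k\<in>S. outer (w k) (w k))"
  using assms
proof (induction S arbitrary: P rule: finite_induct)
  case empty
  then show ?case by (simp add: vec_eq_iff)
next
  case (insert a S)
  define p where "p = Re (P$a$a)"
  \<comment> \<open>If \<open>p = 0\<close> then \<open>c = 0\<close> (as \<open>1 / 0 = 0\<close>), and row \<open>a\<close> of \<open>P\<close> vanishes already.\<close>
  define c where "c = (1 / of_real (sqrt p)) *s (P *v axis a 1)"
  define P' where "P' = P - outer c c"
  have "psd P'"
    unfolding P'_def c_def p_def
    by (intro psd_diff_outer psd_pivot_bound insert.prems)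
  have "of_real (sqrt p) * of_real (sqrt p) = (of_real p :: complex)"
    using psd_diag(2)[OF insert.prems(1), of a] unfolding p_def
    by (simp flip: of_real_mult)
  then have entry: "P'$i$j = P$i$j - P$i$a * cnj (P$j$a) / of_real p" for i j
    by (simp add: P'_def c_def outer_def matrix_vector_mult_axis)
  have "P'$a$a = 0"
    using psd_diag[OF insert.prems(1), of a] unfolding entry p_def[symmetric]
    by (cases "p = 0") (simp_all add: power2_eq_square)
  have "P'$i$j = 0" if "i \<notin> S" for i j
  proof (cases "i = a")
    case True
    then show ?thesis using psd_row_eq_0[OF \<open>psd P'\<close> \<open>P'$a$a = 0\<close>] by simp
  next
    case False
    then show ?thesis using that insert.prems(2) by (simp add: entry)
  qed
  then obtain w where w: "P' = (\<Sum>k\<in>S. outer (w k) (w k))"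
    using insert.IH[OF \<open>psd P'\<close>] by blast
  have "(\<Sum>k\<in>S. outer ((w(a := c)) k) ((w(a := c)) k)) = P'"
    unfolding w using insert.hyps(2) by (intro sum.cong) auto
  then have "P = (\<Sum>k\<in>insert a S. outer ((w(a := c)) k) ((w(a := c)) k))"
    using insert.hyps by (simp add: P'_def)
  then show ?case by blast
qed

lemma psd_eq_sum_outer:
  fixes P :: "complex^'n^'n"
  assumes "psd P"
  shows "\<exists>w :: 'n \<Rightarrow> complex^'n. P = (\<Sum>k\<in>UNIV. outer (w k) (w k))"
  using psd_eq_sum_outer_on[of UNIV P] assms by simp

section \<open>States and the operator norm\<close>

lemma trace_sum: "trace (\<Sum>k\<in>K. A k) = (\<Sum>k\<in>K. trace (A k :: 'a::comm_semiring_1^'n^'n))"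
  by (induct K rule: infinite_finite_induct) (simp_all add: trace_add, simp_all add: trace_def)

lemma trace_mult_sum_outer:
  "trace (A ** (\<Sum>k\<in>K. outer (w k) (w k))) = (\<Sum>k\<in>K. cinner (w k) (A *v w k))"
  by (induct K rule: infinite_finite_induct)
    (simp_all add: matrix_add_ldistrib trace_add trace_mult_outer, simp_all add: trace_def)

lemma trace_sum_outer:
  "trace (\<Sum>k\<in>K. outer (w k) (w k)) = of_real (\<Sum>k\<in>K. (norm (w k))\<^sup>2)"
  using trace_mult_sum_outer[where A = "mat 1"] by (simp add: cinner_self)

lemma density_trace_le_opnorm:
  fixes \<rho> :: "complex^'n^'n"
  assumes "density \<rho>"
  shows "Re (trace (\<rho> ** A)) \<le> opnorm A"
proof -
  obtain w :: "'n \<Rightarrow> complex^'n" where \<rho>: "\<rho> = (\<Sum>k\<in>UNIV. outer (w k) (w k))"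
    using psd_eq_sum_outer assms unfolding density_def by blast
  have "Re (trace (\<rho> ** A)) = (\<Sum>k\<in>UNIV. Re (cinner (w k) (A *v w k)))"
    by (subst trace_mul_sym) (simp add: \<rho> trace_mult_sum_outer Re_sum)
  also have "\<dots> \<le> (\<Sum>k\<in>UNIV. opnorm A * (norm (w k))\<^sup>2)"
    by (intro sum_mono cinner_mult_le_opnorm)
  also have "\<dots> = opnorm A * Re (trace \<rho>)"
    by (simp add: \<rho> trace_sum_outer sum_distrib_left)
  finally show ?thesis using assms by (simp add: density_def)
qed

lemma psd_cinner_le_trace:
  fixes G :: "complex^'n^'n"
  assumes "psd G" and "norm v = 1"
  shows "Re (cinner v (G *v v)) \<le> Re (trace G)"
proof -
  obtain w :: "'n \<Rightarrow> complex^'n" where G: "G = (\<Sum>k\<in>UNIV. outer (w k) (w k))"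
    using psd_eq_sum_outer assms(1) by blast
  have "cinner v (G *v v) = (\<Sum>k\<in>UNIV. of_real ((cmod (cinner (w k) v))\<^sup>2))"
    by (simp add: G matrix_vector_mult_sum_left cinner_sum_right outer_mult_vector
        cinner_scale_right cnj_cinner[of "w _" v, symmetric] complex_norm_square mult.commute
        del: of_real_power)
  then have "Re (cinner v (G *v v)) = (\<Sum>k\<in>UNIV. (cmod (cinner (w k) v))\<^sup>2)"
    by (simp add: Re_sum)
  also have "\<dots> \<le> (\<Sum>k\<in>UNIV. (norm (w k))\<^sup>2)"
    by (intro sum_mono power_mono) (use norm_cinner_le[of "w _" v] assms(2) in auto)
  also have "\<dots> = Re (trace G)"
    by (simp add: G trace_sum_outer)
  finally show ?thesis .
qed

lemma psd_opnorm_le: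
  fixes A :: "complex^'n^'n"
  assumes "psd A" and "0 \<le> m" and "\<And>u. Re (cinner u (A *v u)) \<le> m * (norm u)\<^sup>2"
  shows "opnorm A \<le> m"
  unfolding opnorm_def
proof (rule onorm_le)
  fix w :: "complex^'n"
  define y where "y = A *v w"
  have "((norm y)\<^sup>2)\<^sup>2 = (cmod (cinner y (A *v w)))\<^sup>2"
    by (simp add: y_def cinner_self del: of_real_power)
  also have "\<dots> \<le> Re (cinner y (A *v y)) * Re (cinner w (A *v w))"
    by (rule psd_cauchy_schwarz[OF assms(1)])
  also have "\<dots> \<le> (m * (norm y)\<^sup>2) * (m * (norm w)\<^sup>2)"
    using assms unfolding psd_iff_cinner by (intro mult_mono) auto
  finally have "((norm y)\<^sup>2)\<^sup>2 \<le> (norm y)\<^sup>2 * (m * norm w)\<^sup>2"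
    by (simp add: power2_eq_square mult_ac)
  then have "(norm y)\<^sup>2 \<le> (m * norm w)\<^sup>2"
    by (cases "y = 0") (simp_all add: power2_eq_square)
  then show "norm (A *v w) \<le> m * norm w"
    unfolding y_def by (rule power2_le_imp_le) (simp add: assms(2))
qed

lemma psd_opnorm_attained:
  fixes A :: "complex^'n^'n"
  assumes "psd A"
  shows "\<exists>v. norm v = 1 \<and> Re (cinner v (A *v v)) = opnorm A"
proof -
  define f where "f v = Re (cinner v (A *v v))" for v :: "complex^'n"
  have "continuous_on (sphere 0 1) f"
    unfolding f_def cinner_def
    by (intro continuous_intros linear_continuous_on matrix_vector_mul_bounded_linear)
  moreover have "sphere (0::complex^'n) 1 \<noteq> {}"
    by simp
  ultimately obtain v where v: "v \<in> sphere 0 1" and max: "\<And>u. u \<in> sphere 0 1 \<Longrightarrow> f u \<le> f v"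
    using continuous_attains_sup[OF compact_sphere] by blast
  have "0 \<le> f v"
    using assms unfolding f_def psd_iff_cinner by blast
  moreover have "Re (cinner u (A *v u)) \<le> f v * (norm u)\<^sup>2" for u
  proof (cases "u = 0")
    case True
    then show ?thesis by (simp add: cinner_def)
  next
    case False
    have "f ((1 / norm u) *\<^sub>R u) = Re (cinner u (A *v u)) / (norm u)\<^sup>2"
      by (simp add: f_def scaleR_eq_of_real_scale vector_scalar_commute cinner_scale_left
          cinner_scale_right power2_eq_square)
    moreover have "f ((1 / norm u) *\<^sub>R u) \<le> f v"
      using False by (intro max) simp
    ultimately have "Re (cinner u (A *v u)) / (norm u)\<^sup>2 \<le> f v"
      by simp
    then show ?thesis
      using False by (simp add: pos_divide_le_eq)
  qed
  ultimately have "opnorm A \<le> f v"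
    by (rule psd_opnorm_le[OF assms])
  moreover have "f v \<le> opnorm A"
    using cinner_mult_le_opnorm[of v A] v by (simp add: f_def)
  ultimately show ?thesis
    using v by (auto simp: f_def)
qed

lemma density_trace_eq_opnorm:
  assumes "psd A"
  shows "\<exists>\<rho>. density \<rho> \<and> Re (trace (\<rho> ** A)) = opnorm A"
proof -
  obtain v where v: "norm v = 1" "Re (cinner v (A *v v)) = opnorm A"
    using psd_opnorm_attained[OF assms] by blast
  have "density (outer v v)"
    using trace_sum_outer[of "\<lambda>_. v" "{()}"] v(1) by (simp add: density_def psd_outer)
  moreover have "Re (trace (outer v v ** A)) = opnorm A"
    by (subst trace_mul_sym) (simp add: trace_mult_outer v(2))
  ultimately show ?thesis by blast
qed

section \<open>Random access codes\<close>

lemma qrac_prob_eq: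
  fixes E :: "nat \<Rightarrow> nat \<Rightarrow> complex^'n^'n"
  shows "qrac_prob E M1 M2 = (1 / (2 * real CARD('n) ^ 2)) *
    (\<Sum>x\<in>{1..CARD('n)}. \<Sum>y\<in>{1..CARD('n)}. Re (trace (E x y ** (M1 x + M2 y))))"
  unfolding qrac_prob_def Let_def by (simp add: matrix_add_ldistrib trace_add)

lemma Pqrac_eq:
  fixes M1 M2 :: "nat \<Rightarrow> complex^'n^'n"
  assumes "\<And>x y. x \<in> {1..CARD('n)} \<Longrightarrow> y \<in> {1..CARD('n)} \<Longrightarrow> psd (M1 x + M2 y)"
  shows "Pqrac M1 M2 = (1 / (2 * real CARD('n) ^ 2)) *
    (\<Sum>x\<in>{1..CARD('n)}. \<Sum>y\<in>{1..CARD('n)}. opnorm (M1 x + M2 y))"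
    (is "_ = ?opt")
proof -
  let ?X = "{1..CARD('n)}"
  have "qrac_prob E M1 M2 \<le> ?opt" if "\<forall>x\<in>?X. \<forall>y\<in>?X. density (E x y)" for E
    unfolding qrac_prob_eq
    by (intro mult_left_mono sum_mono density_trace_le_opnorm) (use that in auto)
  moreover
  define E where "E x y = (SOME \<rho>. density \<rho> \<and>
      Re (trace (\<rho> ** (M1 x + M2 y))) = opnorm (M1 x + M2 y))" for x y
  have E: "density (E x y) \<and> Re (trace (E x y ** (M1 x + M2 y))) = opnorm (M1 x + M2 y)"
    if "x \<in> ?X" and "y \<in> ?X" for x y
    unfolding E_def by (rule someI_ex[OF density_trace_eq_opnorm[OF assms[OF that]]])
  then have "qrac_prob E M1 M2 = ?opt"
    unfolding qrac_prob_eq by (intro arg_cong[where f = "\<lambda>s. _ * s"] sum.cong) auto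
  moreover have "E \<in> {E. \<forall>x\<in>?X. \<forall>y\<in>?X. density (E x y)}"
    using E by blast
  ultimately show ?thesis
    unfolding Pqrac_def by (intro cSup_eq_maximum image_eqI[where x = E]) auto
qed

lemma row_column_sum_le:
  fixes g :: "'a \<times> 'b \<Rightarrow> real"
  assumes "finite A" and "finite B" and "x \<in> A" and "y \<in> B"
    and "\<And>p. p \<in> A \<times> B \<Longrightarrow> 0 \<le> g p"
  shows "(\<Sum>b\<in>B. g (x, b)) + (\<Sum>a\<in>A. g (a, y)) \<le> (\<Sum>p\<in>A \<times> B. g p) + g (x, y)"
proof -
  have "(\<Sum>a\<in>A - {x}. g (a, y)) \<le> (\<Sum>a\<in>A - {x}. \<Sum>b\<in>B. g (a, b))"
    using assms by (intro sum_mono member_le_sum) auto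
  moreover have "(\<Sum>a\<in>A. g (a, y)) = g (x, y) + (\<Sum>a\<in>A - {x}. g (a, y))"
    using assms by (simp add: sum.remove)
  moreover have "(\<Sum>p\<in>A \<times> B. g p) = (\<Sum>a\<in>A. \<Sum>b\<in>B. g (a, b))"
    by (simp add: sum.cartesian_product)
  moreover have "\<dots> = (\<Sum>b\<in>B. g (x, b)) + (\<Sum>a\<in>A - {x}. \<Sum>b\<in>B. g (a, b))"
    using assms(1,3) by (rule sum.remove)
  ultimately show ?thesis by linarith
qed

lemma opnorm_marginals_le:
  fixes G :: "'x \<times> 'y \<Rightarrow> complex^'n^'n"
  assumes "povm (X \<times> Y) G" and "x \<in> X" and "y \<in> Y"
  shows "opnorm ((\<Sum>b\<in>Y. G (x, b)) + (\<Sum>a\<in>X. G (a, y))) \<le> 1 + Re (trace (G (x, y)))"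
proof -
  have fin: "finite X" "finite Y"
    using assms finite_cartesian_productD1 finite_cartesian_productD2 unfolding povm_def
    by blast+
  have psd: "\<And>p. p \<in> X \<times> Y \<Longrightarrow> psd (G p)" and total: "(\<Sum>p\<in>X \<times> Y. G p) = mat 1"
    using assms(1) unfolding povm_def by blast+
  have "psd ((\<Sum>b\<in>Y. G (x, b)) + (\<Sum>a\<in>X. G (a, y)))"
    using assms by (intro psd_add psd_sum psd) auto
  then obtain v where v: "norm v = 1"
    and opnorm: "Re (cinner v (((\<Sum>b\<in>Y. G (x, b)) + (\<Sum>a\<in>X. G (a, y))) *v v))
                 = opnorm ((\<Sum>b\<in>Y. G (x, b)) + (\<Sum>a\<in>X. G (a, y)))"
    using psd_opnorm_attained by blast
  define g where "g p = Re (cinner v (G p *v v))" for p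
  have "(\<Sum>p\<in>X \<times> Y. g p) = 1"
    using v total unfolding g_def
    by (simp add: Re_sum[symmetric] cinner_sum_right[symmetric]
        matrix_vector_mult_sum_left[symmetric] cinner_self)
  moreover have "g (x, y) \<le> Re (trace (G (x, y)))"
    unfolding g_def using assms psd v by (intro psd_cinner_le_trace) auto
  moreover have "(\<Sum>b\<in>Y. g (x, b)) + (\<Sum>a\<in>X. g (a, y)) \<le> (\<Sum>p\<in>X \<times> Y. g p) + g (x, y)"
    using fin assms psd unfolding g_def psd_iff_cinner by (intro row_column_sum_le) auto
  ultimately show ?thesis
    unfolding opnorm[symmetric] g_def
    by (simp add: matrix_vector_mult_add_rdistrib matrix_vector_mult_sum_left cinner_add_right
        cinner_sum_right Re_sum)
qed

lemma compatible_sum_opnorm_le: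
  fixes M1 :: "'x \<Rightarrow> complex^'n^'n" and M2 :: "'y \<Rightarrow> complex^'n^'n"
  assumes "compatible X M1 Y M2"
  shows "(\<Sum>x\<in>X. \<Sum>y\<in>Y. opnorm (M1 x + M2 y)) \<le> real (card X * card Y) + real CARD('n)"
proof -
  obtain G where G: "povm (X \<times> Y) G"
    and M1: "\<And>x. x \<in> X \<Longrightarrow> (\<Sum>y\<in>Y. G (x, y)) = M1 x"
    and M2: "\<And>y. y \<in> Y \<Longrightarrow> (\<Sum>x\<in>X. G (x, y)) = M2 y"
    using assms unfolding compatible_def by blast
  have "(\<Sum>x\<in>X. \<Sum>y\<in>Y. opnorm (M1 x + M2 y)) \<le> (\<Sum>x\<in>X. \<Sum>y\<in>Y. 1 + Re (trace (G (x, y))))"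
    using opnorm_marginals_le[OF G] M1 M2 by (intro sum_mono) metis
  also have "\<dots> = real (card X * card Y) + Re (trace (\<Sum>p\<in>X \<times> Y. G p))"
    by (simp add: sum.distrib trace_sum Re_sum sum.cartesian_product card_cartesian_product)
  also have "\<dots> = real (card X * card Y) + real CARD('n)"
    using G by (simp add: povm_def trace_I)
  finally show ?thesis .
qed

theorem theorem1:
  fixes M1 M2 :: "nat \<Rightarrow> complex^'n^'n"
  assumes "CARD('n) \<ge> 2"
    and "povm {1..CARD('n)} M1"
    and "povm {1..CARD('n)} M2"
    and "compatible {1..CARD('n)} M1 {1..CARD('n)} M2"
  shows "Pqrac M1 M2 =
           (1 / (2 * real CARD('n) ^ 2)) *
           (\<Sum>x\<in>{1..CARD('n)}. \<Sum>y\<in>{1..CARD('n)}. opnorm (M1 x + M2 y))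
         \<and> (1 / (2 * real CARD('n) ^ 2)) *
           (\<Sum>x\<in>{1..CARD('n)}. \<Sum>y\<in>{1..CARD('n)}. opnorm (M1 x + M2 y))
           \<le> (1/2) * (1 + 1 / real CARD('n))"
proof -
  let ?c = "1 / (2 * real CARD('n) ^ 2)"
    and ?S = "\<Sum>x\<in>{1..CARD('n)}. \<Sum>y\<in>{1..CARD('n)}. opnorm (M1 x + M2 y)"
  have Pqrac: "Pqrac M1 M2 = ?c * ?S"
    using assms(2,3) by (intro Pqrac_eq psd_add) (auto simp: povm_def)
  have "?S \<le> real CARD('n) * real CARD('n) + real CARD('n)"
    using compatible_sum_opnorm_le[OF assms(4)] by simp
  then have "?c * ?S \<le> ?c * (real CARD('n) * real CARD('n) + real CARD('n))"
    by (rule mult_left_mono) simp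
  also have "\<dots> = (1/2) * (1 + 1 / real CARD('n))"
    by (simp add: field_simps power2_eq_square)
  finally show ?thesis
    using Pqrac by blast
qed

end
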